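(* Let $w\geqslant 2$ and $h\geqslant 1$ be integers, let $\underline h=2^{\lfloor\log_2 h\rfloor}$, and let $\mathcal{H}_{h,w}$ be the set of (mostly vertical, inclined to the right) fast Hough transform patterns on the $h\times w$ image. Then $$\mathrm{OR}(\mathcal{H}_{h,w})\geqslant 3\,w\,\underline h\,\log_3\underline h.$$
   Context: Image: for integers $h\geqslant1$ (height) and $w\geqslant2$ (width), an image is the set $I$ of $wh$ pixel variables $p_{ij}$, $i=0,\dots,h-1$ (row index, counted from the bottom), $j=0,\dots,w-1$ (column index). A pattern is a nonempty subset of $I$; a pattern set $\mathcal{T}=\{T_k\}_{k=1}^m$ is a nonempty set of $m$ distinct patterns. Computing $\mathcal{T}$ means computing simultaneously $y_k=\sum_{p\in T_k}p$, $k=1,\dots,m$, where the "sum" is a commutative semigroup operation on pixel values. Circuits: a circuit is a directed acyclic graph with $wh$ input nodes $p_{ij}$ of fanin zero and $m$ output nodes $y_k$ of fanout zero; every node of nonzero fanin (a gate) may have any positive number of incoming edges and computes the semigroup sum of the values of its in-neighbours. The size of a circuit is its number of edges. A circuit computes $\mathcal{T}$ if, for every assignment of values to the inputs, output $y_k$ equals $\sum_{p\in T_k}p$ for all $k$. $\mathrm{OR}(\mathcal{T})$ is the minimal size of a circuit computing $\mathcal{T}$ when pixel values lie in $\{0,1\}$ and the operation is logical $\vee$. FHT patterns: for a pattern $T$ containing exactly one pixel in each of its rows, let $\Delta(T)=(j_{top}-j_{bot})\bmod w$, where $j_{top},j_{bot}$ are the column indices of the topmost and bottommost pixels of $T$,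 and let $\mathit{tran}_{a,b}(T)=\{p_{i+a,\,(j+b)\bmod w}\mid p_{ij}\in T\}$. For $h=2^d$ define $\mathcal{H}_0=\{\{p_{00}\},\{p_{01}\},\dots,\{p_{0,w-1}\}\}$ and, for $k=1,\dots,d$, $\mathcal{H}_k=\{T\cup\mathit{tran}_{2^{k-1},\,\Delta(T)+s}(T)\mid T\in\mathcal{H}_{k-1},\ s\in\{0,1\}\}$; set $\mathcal{H}_{h,w}=\mathcal{H}_d$. For arbitrary $h\geqslant1$, let $\overline h=2^{\lceil\log_2h\rceil}$, view the $h\times w$ image $I$ as the bottom $h$ rows of the $\overline h\times w$ image, and set $\mathcal{H}_{h,w}=\{T\cap I\mid T\in\mathcal{H}_{\overline h,w}\}$. *)

theory Defs
  imports Complex_Main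
begin

text \<open>Pixels p_ij are represented as pairs (i, j) :: nat \<times> nat
  (i = row index counted from the bottom, j = column index).\<close>

type_synonym pixel = "nat \<times> nat"

definition image :: "nat \<Rightarrow> nat \<Rightarrow> pixel set" where
  "image h w = {(i, j). i < h \<and> j < w}"

text \<open>Column index of the topmost / bottommost pixel of a pattern
  (meaningful for patterns with exactly one pixel per row).\<close>
definition top_col :: "pixel set \<Rightarrow> nat" where
  "top_col T = (THE j. (Max (fst ` T), j) \<in> T)"

definition bot_col :: "pixel set \<Rightarrow> nat" where
  "bot_col T = (THE j. (Min (fst ` T), j) \<in> T)"

definition Delta :: "nat \<Rightarrow> pixel set \<Rightarrow> nat" where
  "Delta w T = nat ((int (top_col T) - int (bot_col T)) mod int w)"

definition tran :: "nat \<Rightarrow> nat \<Rightarrow> nat \<Rightarrow> pixel set \<Rightarrow> pixel set" where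
  "tran w a b T = {(i + a, (j + b) mod w) | i j. (i, j) \<in> T}"

fun FHT_level :: "nat \<Rightarrow> nat \<Rightarrow> pixel set set" where
  "FHT_level w 0 = {{(0, j)} | j. j < w}"
| "FHT_level w (Suc k) =
     {T \<union> tran w (2 ^ k) (Delta w T + s) T | T s. T \<in> FHT_level w k \<and> s \<in> {0, 1}}"

definition FHT :: "nat \<Rightarrow> nat \<Rightarrow> pixel set set" where
  "FHT h w = {T \<inter> image h w | T. T \<in> FHT_level w (nat \<lceil>log 2 (real h)\<rceil>)}"

record circuit =
  nodes :: "nat set"
  edges :: "(nat \<times> nat) set"
  inp :: "pixel \<Rightarrow> nat"
  out :: "pixel set \<Rightarrow> nat"

definition is_circuit :: "nat \<Rightarrow> nat \<Rightarrow> pixel set set \<Rightarrow> circuit \<Rightarrow> bool" where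
  "is_circuit h w \<T> C \<longleftrightarrow>
     finite (nodes C) \<and> edges C \<subseteq> nodes C \<times> nodes C \<and> acyclic (edges C) \<and>
     inj_on (inp C) (image h w) \<and> inp C ` image h w \<subseteq> nodes C \<and>
     (\<forall>p\<in>image h w. \<forall>u. (u, inp C p) \<notin> edges C) \<and>
     (\<forall>v\<in>nodes C. (\<forall>u. (u, v) \<notin> edges C) \<longrightarrow> v \<in> inp C ` image h w) \<and>
     inj_on (out C) \<T> \<and> out C ` \<T> \<subseteq> nodes C \<and>
     (\<forall>T\<in>\<T>. \<forall>v. (out C T, v) \<notin> edges C)"

definition or_eval :: "nat \<Rightarrow> nat \<Rightarrow> circuit \<Rightarrow> (pixel \<Rightarrow> bool) \<Rightarrow> (nat \<Rightarrow> bool) \<Rightarrow> bool" where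
  "or_eval h w C x val \<longleftrightarrow>
     (\<forall>p\<in>image h w. val (inp C p) = x p) \<and>
     (\<forall>v\<in>nodes C. (\<exists>u. (u, v) \<in> edges C) \<longrightarrow> val v = (\<exists>u. (u, v) \<in> edges C \<and> val u))"

definition or_computes :: "nat \<Rightarrow> nat \<Rightarrow> pixel set set \<Rightarrow> circuit \<Rightarrow> bool" where
  "or_computes h w \<T> C \<longleftrightarrow> is_circuit h w \<T> C \<and>
     (\<forall>x val. or_eval h w C x val \<longrightarrow> (\<forall>T\<in>\<T>. val (out C T) = (\<exists>p\<in>T. x p)))"

definition OR_complexity :: "nat \<Rightarrow> nat \<Rightarrow> pixel set set \<Rightarrow> nat" where
  "OR_complexity h w \<T> = (INF C \<in> {C. or_computes h w \<T> C}. card (edges C))"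

end

(*
  Let S(v) be the set of input pixels from which the node v of an OR circuit is reachable;
  correctness forces S(out T) = T for every output pattern T. Give a pixel p below a node r
  the weight c(p), the total fanin of the nodes between p and r. A gate of fanin k splits its
  inputs among k subcircuits and k * 3 powr (-k/3) <= 1, so these weights satisfy the Kraft
  inequality sum 3 powr (-c(p)/3) <= 1, and Gibbs' inequality turns this into
  sum c(p) >= 3 m log_3 m for an output with m pixels.

  Apply this to the 2^d bottom rows, d = floor (log_2 h), on which the patterns restrict to
  the w 2^d FHT patterns of height 2^d, each with 2^d pixels. Summing over them and exchanging
  the order of summation, an edge into v is counted once for each pair of a restricted
  pattern through v and a pixel of S(v) in the bottom rows. These pairs form a "rectangle":
  all the patterns contain the pixel set, and for FHT patterns every rectangle has at most
  2^d entries, because a pattern is determined by its lower half and a bit, while its upper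
  half is a shifted pattern determining the lower half up to a unit shift. Hence
  2^d |E| >= w 2^d * 3 * 2^d log_3 2^d.
*)

theory Submission
  imports Defs "HOL-Number_Theory.Cong"
begin

section \<open>Shifting and stacking pixel sets\<close>

lemma mod_add_right_cancel_less:
  fixes j j' c w :: nat
  assumes "j < w" "j' < w" "(j + c) mod w = (j' + c) mod w"
  shows "j = j'"
  using assms cong_add_rcancel_nat[of j c j' w] unfolding cong_def by simp

lemma mod_add_Suc_neq:
  fixes j c w :: nat
  assumes "2 \<le> w"
  shows "(j + c) mod w \<noteq> (j + Suc c) mod w"
proof
  assume "(j + c) mod w = (j + Suc c) mod w"
  then have "[0 = 1] (mod w)"
    using cong_add_lcancel_nat[of "j + c" 0 1 w] unfolding cong_def by simp
  then show False
    using assms by (simp add: cong_def)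
qed

lemma mem_image_pixels_iff [simp]: "(i, j) \<in> image h w \<longleftrightarrow> i < h \<and> j < w"
  by (simp add: image_def)

lemma image_mono_height: "h \<le> h' \<Longrightarrow> image h w \<subseteq> image h' w"
  by (auto simp: image_def)

lemma finite_image_pixels: "finite (image h w)"
  by (rule finite_subset[of _ "{..<h} \<times> {..<w}"]) (auto simp: image_def)

lemma mem_tran_iff: "(i', j') \<in> tran w a b T \<longleftrightarrow> (\<exists>i j. i' = i + a \<and> j' = (j + b) mod w \<and> (i, j) \<in> T)"
  unfolding tran_def by blast

lemma tran_Un: "tran w a b (A \<union> B) = tran w a b A \<union> tran w a b B"
  unfolding tran_def by blast

lemma tran_tran: "tran w a b (tran w a' b' T) = tran w (a' + a) (b' + b) T"
  unfolding tran_def by (auto simp: mod_add_left_eq add.assoc) (metis add.assoc mod_add_left_eq)+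

lemma mem_tran_vertical_iff:
  assumes "U \<subseteq> UNIV \<times> {..<w}"
  shows "(i + a, j) \<in> tran w a 0 U \<longleftrightarrow> (i, j) \<in> U"
  using assms by (force simp: mem_tran_iff)

lemma tran_0_0: "T \<subseteq> UNIV \<times> {..<w} \<Longrightarrow> tran w 0 0 T = T"
  unfolding tran_def by force

lemma tran_subset_columns: "0 < w \<Longrightarrow> tran w a b T \<subseteq> UNIV \<times> {..<w}"
  unfolding tran_def by auto

lemma tran_0_inj:
  assumes "A \<subseteq> UNIV \<times> {..<w}" "B \<subseteq> UNIV \<times> {..<w}" "tran w 0 c A = tran w 0 c B"
  shows "A = B"
proof -
  have "X \<subseteq> Y" if "X \<subseteq> UNIV \<times> {..<w}" "Y \<subseteq> UNIV \<times> {..<w}" "tran w 0 c X = tran w 0 c Y" for X Y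
  proof (clarify)
    fix i j assume "(i, j) \<in> X"
    then have "(i, (j + c) mod w) \<in> tran w 0 c Y"
      using that(3) mem_tran_iff by (metis add_0_right)
    then obtain j' where "(i, j') \<in> Y" "(j + c) mod w = (j' + c) mod w"
      by (auto simp: mem_tran_iff)
    with \<open>(i, j) \<in> X\<close> that(1,2) show "(i, j) \<in> Y"
      using mod_add_right_cancel_less by blast
  qed
  then show ?thesis
    using assms by (metis subset_antisym)
qed

definition row_graph :: "nat \<Rightarrow> nat \<Rightarrow> pixel set \<Rightarrow> bool" where
  "row_graph w n P \<longleftrightarrow> P \<subseteq> image n w \<and> (\<forall>i<n. \<exists>!j. (i, j) \<in> P)"

lemma row_graph_subset: "row_graph w n P \<Longrightarrow> P \<subseteq> image n w"
  by (simp add: row_graph_def)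

lemma row_graph_columns: "row_graph w n P \<Longrightarrow> P \<subseteq> UNIV \<times> {..<w}"
  by (auto simp: row_graph_def image_def)

lemma row_graph_unique: "row_graph w n P \<Longrightarrow> (i, j) \<in> P \<Longrightarrow> (i, j') \<in> P \<Longrightarrow> j = j'"
  unfolding row_graph_def image_def by blast

lemma row_graph_fst: "row_graph w n P \<Longrightarrow> fst ` P = {..<n}"
  unfolding row_graph_def image_def by force

lemma row_graph_card: "row_graph w n P \<Longrightarrow> card P = n"
proof -
  assume P: "row_graph w n P"
  have "inj_on fst P"
    using row_graph_unique[OF P] by (auto simp: inj_on_def)
  then show "card P = n"
    using card_image row_graph_fst[OF P] by fastforce
qed

lemma bot_col_mem:
  assumes "row_graph w n P" "0 < n"
  shows "(0, bot_col P) \<in> P"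
proof -
  have "Min (fst ` P) = 0"
    using assms by (simp add: row_graph_fst) (rule Min_eqI; auto)
  moreover have "\<exists>!j. (0, j) \<in> P"
    using assms unfolding row_graph_def by blast
  ultimately show ?thesis
    unfolding bot_col_def by (metis theI')
qed

lemma top_col_mem:
  assumes "row_graph w n P" "0 < n"
  shows "(n - 1, top_col P) \<in> P"
proof -
  have "Max (fst ` P) = n - 1"
    using assms by (simp add: row_graph_fst) (rule Max_eqI; auto)
  moreover have "\<exists>!j. (n - 1, j) \<in> P"
    using assms unfolding row_graph_def by simp
  ultimately show ?thesis
    unfolding top_col_def by (metis theI')
qed

lemma row_graph_tran_0:
  assumes "row_graph w n P" "0 < w"
  shows "row_graph w n (tran w 0 c P)"
  unfolding row_graph_def
proof (intro conjI allI impI)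
  show "tran w 0 c P \<subseteq> image n w"
    using row_graph_subset[OF assms(1)] \<open>0 < w\<close> by (auto simp: tran_def)
next
  fix i assume "i < n"
  then obtain j where j: "(i, j) \<in> P" and uniq: "\<And>j'. (i, j') \<in> P \<Longrightarrow> j' = j"
    using assms(1) unfolding row_graph_def by metis
  have "(i, j') \<in> tran w 0 c P \<longleftrightarrow> j' = (j + c) mod w" for j'
    using j uniq unfolding mem_tran_iff by (metis add_0_right)
  then show "\<exists>!j. (i, j) \<in> tran w 0 c P"
    by simp
qed

lemma top_col_tran_0:
  assumes "row_graph w n P" "0 < n" "0 < w"
  shows "top_col (tran w 0 c P) = (top_col P + c) mod w"
proof -
  have "(n - 1, (top_col P + c) mod w) \<in> tran w 0 c P"
    using top_col_mem[OF assms(1,2)] by (force simp: mem_tran_iff)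
  then show ?thesis
    using top_col_mem row_graph_unique row_graph_tran_0 assms by metis
qed

lemma bot_col_tran_0:
  assumes "row_graph w n P" "0 < n" "0 < w"
  shows "bot_col (tran w 0 c P) = (bot_col P + c) mod w"
proof -
  have "(0, (bot_col P + c) mod w) \<in> tran w 0 c P"
    using bot_col_mem[OF assms(1,2)] by (force simp: mem_tran_iff)
  then show ?thesis
    using bot_col_mem row_graph_unique row_graph_tran_0 assms by metis
qed

lemma Delta_tran_0:
  assumes "row_graph w n P" "0 < n" "0 < w"
  shows "Delta w (tran w 0 c P) = Delta w P"
proof -
  have "(int ((top_col P + c) mod w) - int ((bot_col P + c) mod w)) mod int w
      = (int (top_col P + c) - int (bot_col P + c)) mod int w"
    by (simp add: of_nat_mod mod_diff_eq)
  then show ?thesis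
    unfolding Delta_def top_col_tran_0[OF assms] bot_col_tran_0[OF assms] by simp
qed

lemma tran_Suc_disjoint:
  assumes "row_graph w n P" "2 \<le> w"
  shows "tran w a c P \<inter> tran w a (Suc c) P = {}"
proof (rule ccontr)
  assume "tran w a c P \<inter> tran w a (Suc c) P \<noteq> {}"
  then obtain i j j' where "(i, j) \<in> P" "(i, j') \<in> P" "(j + c) mod w = (j' + Suc c) mod w"
    unfolding tran_def by (auto simp del: add_Suc_right)
  with row_graph_unique[OF assms(1)] mod_add_Suc_neq[OF assms(2)] show False
    by metis
qed

lemma tran_0_eq_Suc_disjoint:
  assumes "row_graph w n T" "row_graph w n T'" "2 \<le> w" "tran w 0 d T = tran w 0 (Suc d) T'"
  shows "T \<inter> T' = {}"
proof -
  have "tran w 0 d T = tran w 0 d (tran w 0 1 T')"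
    using assms(4) by (simp add: tran_tran)
  then have "T = tran w 0 1 T'"
    using tran_0_inj row_graph_columns[OF assms(1)] tran_subset_columns assms(3) by simp
  moreover have "T' = tran w 0 0 T'"
    using tran_0_0[OF row_graph_columns[OF assms(2)]] by simp
  ultimately show ?thesis
    using tran_Suc_disjoint[OF assms(2,3), of 0 0] by auto
qed

lemma tran_above_disjoint: "tran w n b T \<inter> image n w = {}"
  unfolding image_def tran_def by auto

definition stack :: "nat \<Rightarrow> nat \<Rightarrow> pixel set \<Rightarrow> pixel set \<Rightarrow> pixel set" where
  "stack w n T U = T \<union> tran w n 0 U"

lemma stack_restrict: "T \<subseteq> image n w \<Longrightarrow> stack w n T U \<inter> image n w = T"
  unfolding stack_def using tran_above_disjoint by blast

lemma stack_above: "T \<subseteq> image n w \<Longrightarrow> stack w n T U - image n w = tran w n 0 U"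
  unfolding stack_def using tran_above_disjoint by blast

lemma tran_vertical_inj:
  assumes "U \<subseteq> UNIV \<times> {..<w}" "U' \<subseteq> UNIV \<times> {..<w}" "tran w a 0 U = tran w a 0 U'"
  shows "U = U'"
proof -
  have "(i, j) \<in> U \<longleftrightarrow> (i, j) \<in> U'" for i j
    using mem_tran_vertical_iff[OF assms(1), of i a j] mem_tran_vertical_iff[OF assms(2), of i a j] assms(3)
    by simp
  then show ?thesis
    by auto
qed

lemma stack_eq_stackD:
  assumes "T \<subseteq> image n w" "T' \<subseteq> image n w" "U \<subseteq> UNIV \<times> {..<w}" "U' \<subseteq> UNIV \<times> {..<w}"
    and "stack w n T U = stack w n T' U'"
  shows "T = T'" "U = U'"
proof -
  show "T = T'"
    using stack_restrict[OF assms(1), of U] stack_restrict[OF assms(2), of U'] assms(5) by simp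
  have "tran w n 0 U = tran w n 0 U'"
    using stack_above[OF assms(1), of U] stack_above[OF assms(2), of U'] assms(5) by simp
  then show "U = U'"
    using tran_vertical_inj assms(3,4) by blast
qed

definition lower_part :: "nat \<Rightarrow> pixel set \<Rightarrow> pixel set" where
  "lower_part n X = {x \<in> X. fst x < n}"

definition upper_part :: "nat \<Rightarrow> pixel set \<Rightarrow> pixel set" where
  "upper_part n X = (\<lambda>(i, j). (i - n, j)) ` {x \<in> X. n \<le> fst x}"

lemma card_lower_upper_part:
  assumes "finite X"
  shows "card X = card (lower_part n X) + card (upper_part n X)"
proof -
  have "card (upper_part n X) = card {x \<in> X. n \<le> fst x}"
    unfolding upper_part_def by (rule card_image) (auto simp: inj_on_def)
  moreover have "X = lower_part n X \<union> {x \<in> X. n \<le> fst x}"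
    by (auto simp: lower_part_def)
  ultimately show ?thesis
    using assms by (metis (no_types, lifting) card_Un_disjoint disjoint_iff finite_Un
        lower_part_def mem_Collect_eq not_le)
qed

lemma subset_stack_iff:
  assumes "T \<subseteq> image n w" "U \<subseteq> UNIV \<times> {..<w}"
  shows "X \<subseteq> stack w n T U \<longleftrightarrow> lower_part n X \<subseteq> T \<and> upper_part n X \<subseteq> U"
proof -
  have "(i, j) \<in> stack w n T U \<longleftrightarrow> (if i < n then (i, j) \<in> T else (i - n, j) \<in> U)" for i j
  proof (cases "i < n")
    case False
    then have "(i, j) \<in> tran w n 0 U \<longleftrightarrow> (i - n, j) \<in> U"
      using mem_tran_vertical_iff[OF assms(2), of "i - n" n j] by simp
    then show ?thesis
      using False assms(1) by (auto simp: stack_def)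
  qed (auto simp: stack_def mem_tran_iff)
  then show ?thesis
    unfolding lower_part_def upper_part_def subset_iff by (force simp: not_less)
qed

lemma row_graph_stack:
  assumes "row_graph w n T" "row_graph w n U" "0 < w"
  shows "row_graph w (2 * n) (stack w n T U)"
  unfolding row_graph_def stack_def
proof (intro conjI allI impI)
  show "T \<union> tran w n 0 U \<subseteq> image (2 * n) w"
    using assms row_graph_subset by (fastforce simp: mem_tran_iff image_def)
next
  fix i assume "i < 2 * n"
  show "\<exists>!j. (i, j) \<in> T \<union> tran w n 0 U"
  proof (cases "i < n")
    case True
    then show ?thesis
      using assms(1) row_graph_def by (auto simp: mem_tran_iff)
  next
    case False
    then have i: "i - n < n" "i = (i - n) + n"
      using \<open>i < 2 * n\<close> by auto
    have "(i, j) \<notin> T" for j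
      using False row_graph_subset[OF assms(1)] by auto
    moreover have "(i, j) \<in> tran w n 0 U \<longleftrightarrow> (i - n, j) \<in> U" for j
      using mem_tran_vertical_iff[OF row_graph_columns[OF assms(2)]] i(2) by metis
    ultimately show ?thesis
      using assms(2) i(1) unfolding row_graph_def by simp
  qed
qed

section \<open>Fast Hough transform patterns\<close>

definition fht_upper :: "nat \<Rightarrow> pixel set \<Rightarrow> nat \<Rightarrow> pixel set" where
  "fht_upper w T s = tran w 0 (Delta w T + s) T"

lemma FHT_level_Suc_eq:
  "FHT_level w (Suc k) = (\<lambda>(T, s). stack w (2 ^ k) T (fht_upper w T s)) ` (FHT_level w k \<times> {0, 1})"
  by (auto simp: stack_def fht_upper_def tran_tran image_iff)

declare FHT_level.simps(2) [simp del]

lemma stack_mem_FHT_level_Suc: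
  "T \<in> FHT_level w k \<Longrightarrow> s \<in> {0, 1} \<Longrightarrow> stack w (2 ^ k) T (fht_upper w T s) \<in> FHT_level w (Suc k)"
  unfolding FHT_level_Suc_eq by force

lemma FHT_level_row_graph: "0 < w \<Longrightarrow> P \<in> FHT_level w k \<Longrightarrow> row_graph w (2 ^ k) P"
proof (induction k arbitrary: P)
  case 0
  then show ?case
    by (auto simp: row_graph_def)
next
  case (Suc k)
  then obtain T s where "T \<in> FHT_level w k" "P = stack w (2 ^ k) T (fht_upper w T s)"
    by (auto simp only: FHT_level_Suc_eq)
  with Suc show ?case
    by (simp add: row_graph_stack row_graph_tran_0 fht_upper_def)
qed

lemma Delta_fht_upper:
  "0 < w \<Longrightarrow> T \<in> FHT_level w k \<Longrightarrow> Delta w (fht_upper w T s) = Delta w T"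
  unfolding fht_upper_def by (rule Delta_tran_0[OF FHT_level_row_graph]) simp_all

lemma FHT_level_tran_0: "0 < w \<Longrightarrow> P \<in> FHT_level w k \<Longrightarrow> tran w 0 c P \<in> FHT_level w k"
proof (induction k arbitrary: P c)
  case 0
  then obtain j where "P = {(0, j)}"
    by auto
  then have "tran w 0 c P = {(0, (j + c) mod w)}"
    by (auto simp: tran_def)
  with \<open>0 < w\<close> show ?case
    by auto
next
  case (Suc k)
  then obtain T s where T: "T \<in> FHT_level w k" "s \<in> {0, 1}"
    and P: "P = stack w (2 ^ k) T (fht_upper w T s)"
    by (auto simp only: FHT_level_Suc_eq)
  have "Delta w (tran w 0 c T) = Delta w T"
    using Delta_tran_0[OF FHT_level_row_graph[OF Suc.prems(1) T(1)]] Suc.prems(1) by simp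
  then have "tran w 0 c P = stack w (2 ^ k) (tran w 0 c T) (fht_upper w (tran w 0 c T) s)"
    unfolding P stack_def fht_upper_def tran_Un tran_tran by (simp add: ac_simps)
  then show ?case
    using Suc.IH[OF Suc.prems(1) T(1)] T(2) by (simp add: stack_mem_FHT_level_Suc)
qed

lemma fht_upper_mem: "0 < w \<Longrightarrow> T \<in> FHT_level w k \<Longrightarrow> fht_upper w T s \<in> FHT_level w k"
  by (simp add: fht_upper_def FHT_level_tran_0)

lemma finite_FHT_level: "finite (FHT_level w k)"
proof (induction k)
  case 0
  have "FHT_level w 0 = (\<lambda>j. {(0, j)}) ` {..<w}"
    by auto
  then show ?case
    by simp
next
  case (Suc k)
  then show ?case
    unfolding FHT_level_Suc_eq by simp
qed

lemma fht_upper_disjoint: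
  assumes "row_graph w n T" "2 \<le> w"
  shows "fht_upper w T 0 \<inter> fht_upper w T 1 = {}"
  using tran_Suc_disjoint[OF assms] by (simp add: fht_upper_def)

lemma fht_upper_nonempty: "row_graph w n T \<Longrightarrow> 0 < n \<Longrightarrow> fht_upper w T s \<noteq> {}"
  using bot_col_mem by (force simp: fht_upper_def tran_def)

lemma inj_on_FHT_level_Suc:
  assumes "2 \<le> w"
  shows "inj_on (\<lambda>(T, s). stack w (2 ^ k) T (fht_upper w T s)) (FHT_level w k \<times> {0, 1})"
proof (rule inj_onI, clarify)
  fix T s T' s'
  assume T: "T \<in> FHT_level w k" "s \<in> {0, 1}" "T' \<in> FHT_level w k" "s' \<in> {0, 1}"
    and eq: "stack w (2 ^ k) T (fht_upper w T s) = stack w (2 ^ k) T' (fht_upper w T' s')"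
  have rg: "row_graph w (2 ^ k) T" "row_graph w (2 ^ k) T'"
    using FHT_level_row_graph assms T by auto
  have cols: "fht_upper w T s \<subseteq> UNIV \<times> {..<w}" "fht_upper w T' s' \<subseteq> UNIV \<times> {..<w}"
    using assms by (simp_all add: fht_upper_def tran_subset_columns)
  note same = stack_eq_stackD[OF rg[THEN row_graph_subset] cols eq]
  moreover have "s = s'"
    using fht_upper_disjoint[OF rg(1) assms] fht_upper_nonempty[OF rg(1)] same T(2,4) by fastforce
  ultimately show "T = T' \<and> s = s'"
    by blast
qed

lemma card_FHT_level: "2 \<le> w \<Longrightarrow> card (FHT_level w k) = w * 2 ^ k"
proof (induction k)
  case 0
  have "FHT_level w 0 = (\<lambda>j. {(0, j)}) ` {..<w}"
    by auto
  moreover have "inj_on (\<lambda>j. {(0::nat, j)}) {..<w}"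
    by (auto simp: inj_on_def)
  ultimately show ?case
    by (simp add: card_image)
next
  case (Suc k)
  then show ?case
    unfolding FHT_level_Suc_eq
    by (subst card_image[OF inj_on_FHT_level_Suc[OF Suc.prems]]) (simp add: card_cartesian_product)
qed

lemma FHT_level_Suc_restrict:
  assumes "0 < w"
  shows "(\<lambda>Q. Q \<inter> image (2 ^ k) w) ` FHT_level w (Suc k) = FHT_level w k"
proof -
  have restrict: "stack w (2 ^ k) T (fht_upper w T s) \<inter> image (2 ^ k) w = T"
    if "T \<in> FHT_level w k" for T s
    using stack_restrict[OF row_graph_subset[OF FHT_level_row_graph[OF assms that]]] .
  have "(\<lambda>Q. Q \<inter> image (2 ^ k) w) ` FHT_level w (Suc k) = fst ` (FHT_level w k \<times> {0, 1::nat})"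
    unfolding FHT_level_Suc_eq image_image by (intro image_cong refl) (clarsimp simp: restrict)
  then show ?thesis
    by simp
qed

lemma FHT_level_restrict:
  assumes "0 < w" "k \<le> D"
  shows "(\<lambda>Q. Q \<inter> image (2 ^ k) w) ` FHT_level w D = FHT_level w k"
  using assms(2)
proof (induction D rule: dec_induct)
  case base
  have "Q \<inter> image (2 ^ k) w = Q" if "Q \<in> FHT_level w k" for Q
    using row_graph_subset FHT_level_row_graph assms(1) that by blast
  then show ?case
    by simp
next
  case (step D)
  have "image (2 ^ k) w \<subseteq> image (2 ^ D) w"
    using step(1) by (simp add: image_mono_height)
  then have "(\<lambda>Q. Q \<inter> image (2 ^ k) w) ` FHT_level w (Suc D)
      = (\<lambda>Q. Q \<inter> image (2 ^ k) w) ` (\<lambda>Q. Q \<inter> image (2 ^ D) w) ` FHT_level w (Suc D)"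
    by (auto simp: image_image Int_assoc Int_absorb2)
  then show ?case
    using FHT_level_Suc_restrict[OF assms(1)] step(3) by simp
qed

section \<open>The rectangle bound\<close>

lemma fht_upper_eqD:
  assumes "T \<in> FHT_level w k" "T' \<in> FHT_level w k" "s \<in> {0, 1}" "s' \<in> {0, 1}" "2 \<le> w"
    and eq: "fht_upper w T s = fht_upper w T' s'"
  shows "s = s' \<Longrightarrow> T = T'" and "s \<noteq> s' \<Longrightarrow> T \<inter> T' = {}"
proof -
  have rg: "row_graph w (2 ^ k) T" "row_graph w (2 ^ k) T'"
    using FHT_level_row_graph assms by auto
  have "Delta w T = Delta w T'"
    using Delta_fht_upper[of w T k s] Delta_fht_upper[of w T' k s'] eq assms by simp
  then have tr: "tran w 0 (Delta w T + s) T = tran w 0 (Delta w T + s') T'"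
    using eq by (simp add: fht_upper_def)
  show "T = T'" if "s = s'"
    using tr tran_0_inj[OF row_graph_columns[OF rg(1)] row_graph_columns[OF rg(2)]] that by simp
  show "T \<inter> T' = {}" if "s \<noteq> s'"
  proof -
    have "s = 0 \<and> s' = 1 \<or> s = 1 \<and> s' = 0"
      using assms(3,4) that by auto
    then show ?thesis
    proof (elim disjE conjE)
      assume "s = 0" "s' = 1"
      then show ?thesis
        using tr tran_0_eq_Suc_disjoint[OF rg assms(5)] by simp
    next
      assume "s = 1" "s' = 0"
      then show ?thesis
        using tr[symmetric] tran_0_eq_Suc_disjoint[OF rg(2,1) assms(5)] by (simp add: Int_commute)
    qed
  qed
qed

definition fht_split_pairs :: "nat \<Rightarrow> nat \<Rightarrow> pixel set \<Rightarrow> pixel set \<Rightarrow> (pixel set \<times> nat) set" where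
  "fht_split_pairs w k Y Z = {(T, s) \<in> FHT_level w k \<times> {0, 1}. Y \<subseteq> T \<and> Z \<subseteq> fht_upper w T s}"

lemma card_FHT_level_Suc_supsets:
  assumes "2 \<le> w"
  shows "card {P \<in> FHT_level w (Suc k). X \<subseteq> P}
    = card (fht_split_pairs w k (lower_part (2 ^ k) X) (upper_part (2 ^ k) X))"
proof -
  let ?child = "\<lambda>(T, s). stack w (2 ^ k) T (fht_upper w T s)"
  let ?pairs = "fht_split_pairs w k (lower_part (2 ^ k) X) (upper_part (2 ^ k) X)"
  have "X \<subseteq> stack w (2 ^ k) T (fht_upper w T s)
      \<longleftrightarrow> lower_part (2 ^ k) X \<subseteq> T \<and> upper_part (2 ^ k) X \<subseteq> fht_upper w T s"
    if "T \<in> FHT_level w k" for T s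
    using subset_stack_iff[OF row_graph_subset[OF FHT_level_row_graph], of w T k "fht_upper w T s"] assms that
    by (simp add: fht_upper_def tran_subset_columns)
  then have "{x \<in> FHT_level w k \<times> {0, 1}. X \<subseteq> ?child x} = ?pairs"
    unfolding fht_split_pairs_def by (intro Collect_cong) (simp cong: conj_cong split: prod.split)
  then have "{P \<in> FHT_level w (Suc k). X \<subseteq> P} = ?child ` ?pairs"
    unfolding FHT_level_Suc_eq Compr_image_eq by simp
  moreover have "inj_on ?child ?pairs"
    using inj_on_FHT_level_Suc[OF assms] by (rule inj_on_subset) (auto simp: fht_split_pairs_def)
  ultimately show ?thesis
    by (simp add: card_image)
qed

lemma card_fht_split_pairs_le_lower:
  assumes "2 \<le> w"
  shows "card (fht_split_pairs w k Y Z) \<le> 2 * card {T \<in> FHT_level w k. Y \<subseteq> T}"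
    and "Z \<noteq> {} \<Longrightarrow> card (fht_split_pairs w k Y Z) \<le> card {T \<in> FHT_level w k. Y \<subseteq> T}"
proof -
  have fin: "finite {T \<in> FHT_level w k. Y \<subseteq> T}"
    using finite_FHT_level by simp
  have "fht_split_pairs w k Y Z \<subseteq> {T \<in> FHT_level w k. Y \<subseteq> T} \<times> {0, 1}"
    by (auto simp: fht_split_pairs_def)
  from card_mono[OF _ this] fin show "card (fht_split_pairs w k Y Z) \<le> 2 * card {T \<in> FHT_level w k. Y \<subseteq> T}"
    by (simp add: card_cartesian_product)
  assume "Z \<noteq> {}"
  have "inj_on fst (fht_split_pairs w k Y Z)"
  proof (rule inj_onI, clarify)
    fix T s T' s'
    assume "(T, s) \<in> fht_split_pairs w k Y Z" "(T', s') \<in> fht_split_pairs w k Y Z" "fst (T, s) = fst (T', s')"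
    then have "T = T'" "T \<in> FHT_level w k" "Z \<subseteq> fht_upper w T s \<inter> fht_upper w T s'"
      "s \<in> {0, 1}" "s' \<in> {0, 1}"
      by (auto simp: fht_split_pairs_def)
    moreover have "fht_upper w T 0 \<inter> fht_upper w T 1 = {}"
      using fht_upper_disjoint[OF FHT_level_row_graph assms] assms \<open>T \<in> FHT_level w k\<close> by simp
    ultimately show "T = T' \<and> s = s'"
      using \<open>Z \<noteq> {}\<close> by blast
  qed
  moreover have "fst ` fht_split_pairs w k Y Z \<subseteq> {T \<in> FHT_level w k. Y \<subseteq> T}"
    by (auto simp: fht_split_pairs_def)
  ultimately show "card (fht_split_pairs w k Y Z) \<le> card {T \<in> FHT_level w k. Y \<subseteq> T}"
    using card_inj_on_le fin by blast
qed

lemma card_fht_split_pairs_le_upper: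
  assumes "2 \<le> w"
  shows "card (fht_split_pairs w k Y Z) \<le> 2 * card {Q \<in> FHT_level w k. Z \<subseteq> Q}"
    and "Y \<noteq> {} \<Longrightarrow> card (fht_split_pairs w k Y Z) \<le> card {Q \<in> FHT_level w k. Z \<subseteq> Q}"
proof -
  let ?pairs = "fht_split_pairs w k Y Z"
  have fin: "finite {Q \<in> FHT_level w k. Z \<subseteq> Q}"
    using finite_FHT_level by simp
  have same: "T = T'"
    if "fht_upper w T s = fht_upper w T' s" "(T, s) \<in> ?pairs" "(T', s) \<in> ?pairs" for T T' s
    using fht_upper_eqD(1)[where k = k, OF _ _ _ _ assms that(1)] that(2,3) by (simp add: fht_split_pairs_def)
  have cross: "T \<inter> T' = {}"
    if "fht_upper w T s = fht_upper w T' s'" "(T, s) \<in> ?pairs" "(T', s') \<in> ?pairs" "s \<noteq> s'" for T T' s s'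
    using fht_upper_eqD(2)[where k = k, OF _ _ _ _ assms that(1)] that(2-4) by (simp add: fht_split_pairs_def)
  have maps: "fht_upper w T s \<in> {Q \<in> FHT_level w k. Z \<subseteq> Q}" if "(T, s) \<in> ?pairs" for T s
    using fht_upper_mem assms that by (auto simp: fht_split_pairs_def)
  have "inj_on (\<lambda>(T, s). (fht_upper w T s, s)) ?pairs"
    by (rule inj_onI) (auto dest: same)
  moreover have "(\<lambda>(T, s). (fht_upper w T s, s)) ` ?pairs \<subseteq> {Q \<in> FHT_level w k. Z \<subseteq> Q} \<times> {0, 1}"
    using maps by (auto simp: fht_split_pairs_def)
  then have "card ?pairs \<le> card ({Q \<in> FHT_level w k. Z \<subseteq> Q} \<times> {0::nat, 1})"
    using calculation fin by (intro card_inj_on_le) auto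
  then show "card ?pairs \<le> 2 * card {Q \<in> FHT_level w k. Z \<subseteq> Q}"
    by (simp add: card_cartesian_product)
  assume "Y \<noteq> {}"
  then have same_s: "s = s'"
    if "fht_upper w T s = fht_upper w T' s'" "(T, s) \<in> ?pairs" "(T', s') \<in> ?pairs" for T T' s s'
    using cross[OF that] that(2,3) by (auto simp: fht_split_pairs_def)
  have "inj_on (\<lambda>(T, s). fht_upper w T s) ?pairs"
    by (rule inj_onI) (auto dest: same_s same)
  moreover have "(\<lambda>(T, s). fht_upper w T s) ` ?pairs \<subseteq> {Q \<in> FHT_level w k. Z \<subseteq> Q}"
    using maps by auto
  ultimately show "card ?pairs \<le> card {Q \<in> FHT_level w k. Z \<subseteq> Q}"
    using card_inj_on_le fin by blast
qed

lemma rectangle_bound_step: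
  fixes c a b x y N :: nat
  assumes "c \<le> 2 * a" "c \<le> 2 * b" "y \<noteq> 0 \<Longrightarrow> c \<le> a" "x \<noteq> 0 \<Longrightarrow> c \<le> b"
    and "a * x \<le> N" "b * y \<le> N"
  shows "c * (x + y) \<le> 2 * N"
proof (cases "x = 0 \<or> y = 0")
  case True
  then show ?thesis
    using assms(1,2,5,6) by (auto intro: order.trans[OF mult_le_mono1])
next
  case False
  then have "c * x + c * y \<le> a * x + b * y"
    using assms(3,4) by (intro add_mono mult_le_mono1) auto
  then show ?thesis
    using assms(5,6) by (simp add: algebra_simps)
qed

lemma FHT_level_rectangle_bound:
  assumes "2 \<le> w"
  shows "card {P \<in> FHT_level w k. X \<subseteq> P} * card X \<le> 2 ^ k"
proof (induction k arbitrary: X)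
  case 0
  show ?case
  proof (cases "X = {} \<or> {P \<in> FHT_level w 0. X \<subseteq> P} = {}")
    case False
    then obtain j where "X \<subseteq> {(0, j)}" "X \<noteq> {}"
      by auto
    then have X: "X = {(0, j)}"
      by auto
    then have "{P \<in> FHT_level w 0. X \<subseteq> P} \<subseteq> {X}"
      by auto
    then have "card {P \<in> FHT_level w 0. X \<subseteq> P} \<le> 1"
      using card_mono[of "{X}"] by simp
    then show ?thesis
      using X by simp
  qed (metis card.empty le0 mult_0 mult_0_right)
next
  case (Suc k)
  show ?case
  proof (cases "finite X")
    case True
    let ?Y = "lower_part (2 ^ k) X" and ?Z = "upper_part (2 ^ k) X"
    have N: "card {P \<in> FHT_level w (Suc k). X \<subseteq> P} = card (fht_split_pairs w k ?Y ?Z)"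
      by (rule card_FHT_level_Suc_supsets[OF assms])
    note lower = card_fht_split_pairs_le_lower[OF assms, where k = k and Y = ?Y and Z = ?Z, folded N]
      and upper = card_fht_split_pairs_le_upper[OF assms, where k = k and Y = ?Y and Z = ?Z, folded N]
    have "card {P \<in> FHT_level w (Suc k). X \<subseteq> P} * (card ?Y + card ?Z) \<le> 2 * 2 ^ k"
      by (rule rectangle_bound_step[OF lower(1) upper(1) lower(2) upper(2) Suc.IH Suc.IH]) auto
    then show ?thesis
      using card_lower_upper_part[OF True] by simp
  qed simp
qed

section \<open>A Kraft-type inequality\<close>

lemma cube_le_three_pow: "k ^ 3 \<le> (3::nat) ^ k"
proof (cases "3 \<le> k")
  case True
  then show ?thesis
  proof (induction k rule: dec_induct)
    case (step m)
    have "3 * m ^ 2 + 3 * m + 1 \<le> 2 * m ^ 3"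
    proof -
      have "9 * m \<le> m ^ 3" "3 * m ^ 2 \<le> m ^ 3"
        using step(1) mult_le_mono[OF step(1) step(1)] by (simp_all add: power3_eq_cube power2_eq_square)
      then show ?thesis
        using step(1) by linarith
    qed
    then have "Suc m ^ 3 \<le> 3 * m ^ 3"
      by (simp add: power3_eq_cube power2_eq_square algebra_simps)
    then show ?case
      using step(3) by simp
  qed simp
next
  case False
  then have "k \<in> {0, 1, 2}"
    by auto
  then show ?thesis
    by auto
qed

lemma le_three_powr_third: "real k \<le> 3 powr (real k / 3)"
proof -
  have "real k ^ 3 \<le> 3 ^ k"
    using cube_le_three_pow[of k] by (metis of_nat_le_iff of_nat_numeral of_nat_power)
  also have "(3::real) ^ k = (3 powr (real k / 3)) ^ 3"
    by (simp add: powr_realpow[symmetric] powr_powr)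
  finally show ?thesis
    using power_le_imp_le_base[of "real k" 2] by simp
qed

lemma three_powr_neg_third_mult_le_one: "3 powr (- real k / 3) * real k \<le> 1"
proof -
  have "3 powr (- real k / 3) * 3 powr (real k / 3) = 1"
    by (simp add: powr_add[symmetric])
  then show ?thesis
    using le_three_powr_third[of k] by (metis mult_left_mono powr_ge_zero)
qed

lemma three_powr_neg_third_add_le:
  fixes a b c :: nat
  assumes "a + b \<le> c"
  shows "3 powr (- real c / 3) \<le> 3 powr (- real a / 3) * 3 powr (- real b / 3)"
proof -
  have "3 powr (- real c / 3) \<le> 3 powr (- real (a + b) / 3)"
    using assms by (intro powr_mono) auto
  also have "\<dots> = 3 powr (- real a / 3) * 3 powr (- real b / 3)"
    by (simp add: powr_add[symmetric] diff_divide_distrib)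
  finally show ?thesis .
qed

text \<open>Gibbs' inequality against the uniform distribution on \<open>A\<close>, via the tangent
  line of \<open>exp\<close> at the mean of \<open>c\<close>.\<close>

lemma kraft_sum_lower_bound:
  assumes "finite A" "A \<noteq> {}" and kraft: "(\<Sum>p\<in>A. 3 powr (- c p / 3)) \<le> 1"
  shows "3 * real (card A) * log 3 (real (card A)) \<le> (\<Sum>p\<in>A. c p)"
proof -
  define m where "m = real (card A)"
  define a where "a = (\<Sum>p\<in>A. c p) / m"
  define l where "l = ln 3 / (3::real)"
  have m: "m > 0"
    unfolding m_def using assms by (simp add: card_gt_0_iff)
  have l: "l > 0"
    unfolding l_def by simp
  have tangent: "exp (- a * l) * (1 + (a - c p) * l) \<le> 3 powr (- c p / 3)" for p
  proof -
    have "exp (- a * l) * (1 + (a - c p) * l) \<le> exp (- a * l) * exp ((a - c p) * l)"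
      by (intro mult_left_mono) (auto simp: exp_ge_add_one_self)
    also have "\<dots> = 3 powr (- c p / 3)"
      by (simp add: exp_add[symmetric] powr_def l_def field_simps)
    finally show ?thesis .
  qed
  have "(\<Sum>p\<in>A. exp (- a * l) * (1 + (a - c p) * l))
      = exp (- a * l) * (m + (m * a - (\<Sum>p\<in>A. c p)) * l)"
    by (simp add: sum_distrib_left[symmetric] sum.distrib sum_subtractf m_def algebra_simps
        sum_distrib_right[symmetric])
  also have "m * a = (\<Sum>p\<in>A. c p)"
    unfolding a_def using m by simp
  finally have "exp (- a * l) * m \<le> 1"
    using sum_mono[of A _ "\<lambda>p. 3 powr (- c p / 3)", OF tangent] kraft by simp
  then have "- a * l + ln m \<le> 0"
    using m by (simp add: ln_mult ln_le_zero_iff[symmetric])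
  then have "3 * log 3 m \<le> a"
    using l unfolding l_def log_def by (simp add: field_simps)
  then show ?thesis
    using m unfolding a_def m_def by (simp add: field_simps)
qed

section \<open>OR circuits\<close>

lemma circuit_finite_nodes: "is_circuit h w \<T> C \<Longrightarrow> finite (nodes C)"
  unfolding is_circuit_def by (elim conjE)

lemma circuit_edges_subset: "is_circuit h w \<T> C \<Longrightarrow> edges C \<subseteq> nodes C \<times> nodes C"
  unfolding is_circuit_def by (elim conjE)

lemma circuit_acyclic: "is_circuit h w \<T> C \<Longrightarrow> acyclic (edges C)"
  unfolding is_circuit_def by (elim conjE)

lemma circuit_inj_on_inp: "is_circuit h w \<T> C \<Longrightarrow> inj_on (inp C) (image h w)"
  unfolding is_circuit_def by (elim conjE)

lemma circuit_no_edge_into_inp: "is_circuit h w \<T> C \<Longrightarrow> p \<in> image h w \<Longrightarrow> (u, inp C p) \<notin> edges C"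
  unfolding is_circuit_def by (elim conjE) blast

lemma circuit_source_is_inp:
  "is_circuit h w \<T> C \<Longrightarrow> v \<in> nodes C \<Longrightarrow> \<forall>u. (u, v) \<notin> edges C \<Longrightarrow> v \<in> inp C ` image h w"
  unfolding is_circuit_def by (elim conjE) blast

lemma circuit_out_node: "is_circuit h w \<T> C \<Longrightarrow> T \<in> \<T> \<Longrightarrow> out C T \<in> nodes C"
  unfolding is_circuit_def by (elim conjE) blast

lemma circuit_finite_edges: "is_circuit h w \<T> C \<Longrightarrow> finite (edges C)"
  by (metis circuit_edges_subset circuit_finite_nodes finite_SigmaI finite_subset)

lemma finite_in_edges:
  assumes "is_circuit h w \<T> C"
  shows "finite {u. (u, v) \<in> edges C}"
proof -
  have "{u. (u, v) \<in> edges C} \<subseteq> nodes C"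
    using circuit_edges_subset[OF assms] by blast
  then show ?thesis
    using circuit_finite_nodes[OF assms] by (rule finite_subset)
qed

lemma circuit_rtrancl_into_inp:
  assumes "is_circuit h w \<T> C" "p \<in> image h w" "(u, inp C p) \<in> (edges C)\<^sup>*"
  shows "u = inp C p"
  using assms(3) by (rule rtranclE) (use circuit_no_edge_into_inp[OF assms(1,2)] in auto)

definition input_support :: "nat \<Rightarrow> nat \<Rightarrow> circuit \<Rightarrow> nat \<Rightarrow> pixel set" where
  "input_support h w C v = {p \<in> image h w. (inp C p, v) \<in> (edges C)\<^sup>*}"

definition cone :: "circuit \<Rightarrow> nat \<Rightarrow> nat set" where
  "cone C v = {u \<in> nodes C. (u, v) \<in> (edges C)\<^sup>*}"

definition fanin :: "circuit \<Rightarrow> nat \<Rightarrow> nat" where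
  "fanin C v = card {u. (u, v) \<in> edges C}"

lemma finite_input_support: "finite (input_support h w C v)"
  unfolding input_support_def using finite_image_pixels by simp

lemma input_support_mono: "(u, v) \<in> (edges C)\<^sup>* \<Longrightarrow> input_support h w C u \<subseteq> input_support h w C v"
  unfolding input_support_def by auto

lemma input_support_inp:
  assumes "is_circuit h w \<T> C" "p \<in> image h w"
  shows "input_support h w C (inp C p) = {p}"
  using circuit_rtrancl_into_inp[OF assms] circuit_inj_on_inp[OF assms(1)] assms(2)
  unfolding input_support_def inj_on_def by auto

lemma input_support_gate:
  assumes "is_circuit h w \<T> C" "p \<in> input_support h w C v" "(u, v) \<in> edges C"
  obtains u' where "(u', v) \<in> edges C" "p \<in> input_support h w C u'"
proof -
  have p: "p \<in> image h w" "(inp C p, v) \<in> (edges C)\<^sup>*"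
    using assms(2) by (auto simp: input_support_def)
  then have "inp C p \<noteq> v"
    using circuit_no_edge_into_inp[OF assms(1) p(1)] assms(3) by blast
  then obtain u' where "(inp C p, u') \<in> (edges C)\<^sup>*" "(u', v) \<in> edges C"
    using p(2) by (metis rtranclE)
  then show thesis
    using that p(1) by (auto simp: input_support_def)
qed

lemma or_eval_input_support:
  assumes "is_circuit h w \<T> C"
  shows "or_eval h w C x (\<lambda>v. \<exists>p\<in>input_support h w C v. x p)"
  unfolding or_eval_def
proof (intro conjI ballI impI)
  fix p assume "p \<in> image h w"
  then show "(\<exists>q\<in>input_support h w C (inp C p). x q) = x p"
    using input_support_inp[OF assms] by simp
next
  fix v assume "\<exists>u. (u, v) \<in> edges C"
  then obtain u0 where u0: "(u0, v) \<in> edges C"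
    by blast
  show "(\<exists>p\<in>input_support h w C v. x p) = (\<exists>u. (u, v) \<in> edges C \<and> (\<exists>p\<in>input_support h w C u. x p))"
  proof
    assume "\<exists>p\<in>input_support h w C v. x p"
    then obtain p where "p \<in> input_support h w C v" "x p"
      by blast
    then show "\<exists>u. (u, v) \<in> edges C \<and> (\<exists>p\<in>input_support h w C u. x p)"
      using input_support_gate[OF assms _ u0] by metis
  next
    assume "\<exists>u. (u, v) \<in> edges C \<and> (\<exists>p\<in>input_support h w C u. x p)"
    then show "\<exists>p\<in>input_support h w C v. x p"
      using input_support_mono[OF r_into_rtrancl] by blast
  qed
qed

lemma input_support_out:
  assumes "or_computes h w \<T> C" "T \<in> \<T>" "T \<subseteq> image h w"
  shows "input_support h w C (out C T) = T"
proof -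
  have "(\<exists>q\<in>input_support h w C (out C T). q = p) = (\<exists>q\<in>T. q = p)" for p
    using assms(1,2) or_eval_input_support[of h w \<T> C "\<lambda>q. q = p"] unfolding or_computes_def by blast
  then show ?thesis
    by blast
qed

lemma card_edges_eq_sum_fanin:
  assumes "is_circuit h w \<T> C"
  shows "card (edges C) = (\<Sum>v\<in>nodes C. fanin C v)"
proof -
  have eq: "edges C = (\<lambda>(v, u). (u, v)) ` (SIGMA v:nodes C. {u. (u, v) \<in> edges C})"
    using circuit_edges_subset[OF assms] by force
  have inj: "inj_on (\<lambda>(v, u). (u, v)) (SIGMA v:nodes C. {u. (u, v) \<in> edges C})"
    by (auto simp: inj_on_def)
  show ?thesis
    unfolding fanin_def using circuit_finite_nodes[OF assms] finite_in_edges[OF assms]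
    by (subst eq, subst card_image[OF inj]) simp
qed

definition fanin_between :: "nat \<Rightarrow> nat \<Rightarrow> circuit \<Rightarrow> pixel \<Rightarrow> nat \<Rightarrow> nat" where
  "fanin_between h w C p v = (\<Sum>u\<in>{u \<in> cone C v. p \<in> input_support h w C u}. fanin C u)"

lemma fanin_between_edge:
  assumes "is_circuit h w \<T> C" "(u, v) \<in> edges C" "p \<in> input_support h w C u"
  shows "fanin C v + fanin_between h w C p u \<le> fanin_between h w C p v"
proof -
  have "v \<notin> cone C u"
  proof
    assume "v \<in> cone C u"
    then have "(v, u) \<in> (edges C)\<^sup>*"
      by (simp add: cone_def)
    then have "(v, v) \<in> (edges C)\<^sup>+"
      using assms(2) by (rule rtrancl_into_trancl1)
    then show False
      using circuit_acyclic[OF assms(1)] unfolding acyclic_def by blast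
  qed
  moreover have sub: "insert v {x \<in> cone C u. p \<in> input_support h w C x} \<subseteq> {x \<in> cone C v. p \<in> input_support h w C x}"
    using assms circuit_edges_subset[OF assms(1)] input_support_mono[OF r_into_rtrancl[OF assms(2)]]
    unfolding cone_def by (auto intro: rtrancl_into_rtrancl)
  moreover have fin: "finite {x \<in> cone C v. p \<in> input_support h w C x}"
    using circuit_finite_nodes[OF assms(1)] unfolding cone_def by simp
  ultimately show ?thesis
    unfolding fanin_between_def
    using sum_mono2[OF fin sub, of "fanin C"] finite_subset[OF sub fin] by simp
qed

lemma kraft_gate_step:
  assumes C: "is_circuit h w \<T> C" and "(u0, v) \<in> edges C"
    and IH: "\<And>u. (u, v) \<in> edges C \<Longrightarrow>
      (\<Sum>p\<in>input_support h w C u. 3 powr (- real (fanin_between h w C p u) / 3)) \<le> 1"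
  shows "(\<Sum>p\<in>input_support h w C v. 3 powr (- real (fanin_between h w C p v) / 3)) \<le> 1"
proof -
  let ?S = "input_support h w C" and ?F = "\<lambda>p u. 3 powr (- real (fanin_between h w C p u) / 3)"
  let ?U = "{u. (u, v) \<in> edges C}" and ?c = "3 powr (- real (fanin C v) / 3)"
  have finU: "finite ?U"
    by (rule finite_in_edges[OF C])
  have "(\<Sum>p\<in>?S v. ?F p v) \<le> (\<Sum>p\<in>?S v. \<Sum>u\<in>{u \<in> ?U. p \<in> ?S u}. ?c * ?F p u)"
  proof (rule sum_mono)
    fix p assume "p \<in> ?S v"
    then obtain u where u: "(u, v) \<in> edges C" "p \<in> ?S u"
      using input_support_gate[OF C _ assms(2)] by blast
    then have "?F p v \<le> ?c * ?F p u"
      by (intro three_powr_neg_third_add_le fanin_between_edge[OF C])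
    also have "\<dots> \<le> (\<Sum>u\<in>{u \<in> ?U. p \<in> ?S u}. ?c * ?F p u)"
      by (rule member_le_sum) (use u finU in auto)
    finally show "?F p v \<le> (\<Sum>u\<in>{u \<in> ?U. p \<in> ?S u}. ?c * ?F p u)" .
  qed
  also have "\<dots> = ?c * (\<Sum>u\<in>?U. \<Sum>p\<in>{p \<in> ?S v. p \<in> ?S u}. ?F p u)"
    by (subst sum.swap_restrict[OF finite_input_support finU]) (simp add: sum_distrib_left)
  also have "\<dots> = ?c * (\<Sum>u\<in>?U. \<Sum>p\<in>?S u. ?F p u)"
  proof -
    have "{p \<in> ?S v. p \<in> ?S u} = ?S u" if "u \<in> ?U" for u
      using input_support_mono[OF r_into_rtrancl, of u v C h w] that by blast
    then show ?thesis
      by simp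
  qed
  also have "\<dots> \<le> ?c * real (fanin C v)"
  proof -
    have "(\<Sum>u\<in>?U. \<Sum>p\<in>?S u. ?F p u) \<le> (\<Sum>u\<in>?U. 1)"
      using IH by (intro sum_mono) simp
    then show ?thesis
      by (intro mult_left_mono) (simp_all add: fanin_def)
  qed
  also have "\<dots> \<le> 1"
    by (rule three_powr_neg_third_mult_le_one)
  finally show ?thesis .
qed

lemma kraft_fanin_between:
  assumes C: "is_circuit h w \<T> C"
  shows "v \<in> nodes C \<Longrightarrow> (\<Sum>p\<in>input_support h w C v. 3 powr (- real (fanin_between h w C p v) / 3)) \<le> 1"
proof (induction v rule: wf_induct_rule[OF finite_acyclic_wf[OF circuit_finite_edges[OF C] circuit_acyclic[OF C]]])
  case (1 v)
  show ?case
  proof (cases "\<exists>u. (u, v) \<in> edges C")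
    case True
    then obtain u0 where "(u0, v) \<in> edges C"
      by blast
    then show ?thesis
      using kraft_gate_step[OF C] 1 circuit_edges_subset[OF C] by blast
  next
    case False
    then obtain p where "p \<in> image h w" "v = inp C p"
      using circuit_source_is_inp[OF C 1(2)] by blast
    then show ?thesis
      using input_support_inp[OF C] by (simp add: powr_minus_divide ge_one_powr_ge_zero)
  qed
qed

lemma finite_cone: "is_circuit h w \<T> C \<Longrightarrow> finite (cone C v)"
  unfolding cone_def using circuit_finite_nodes by simp

lemma sum_fanin_cone_eq:
  assumes "is_circuit h w \<T> C"
  shows "(\<Sum>v\<in>cone C r. fanin C v * card (input_support h w C v \<inter> B))
    = (\<Sum>p\<in>input_support h w C r \<inter> B. fanin_between h w C p r)"
proof -
  let ?S = "input_support h w C"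
  have "?S v \<inter> B = {p \<in> ?S r \<inter> B. p \<in> ?S v}" if "v \<in> cone C r" for v
    using input_support_mono[of v r C h w] that unfolding cone_def by blast
  then have "(\<Sum>v\<in>cone C r. fanin C v * card (?S v \<inter> B))
      = (\<Sum>v\<in>cone C r. \<Sum>p\<in>{p \<in> ?S r \<inter> B. p \<in> ?S v}. fanin C v)"
    by (intro sum.cong refl) simp
  also have "\<dots> = (\<Sum>p\<in>?S r \<inter> B. \<Sum>v\<in>{v \<in> cone C r. p \<in> ?S v}. fanin C v)"
    by (rule sum.swap_restrict[OF finite_cone[OF assms]]) (simp add: finite_input_support)
  finally show ?thesis
    unfolding fanin_between_def .
qed

lemma sum_fanin_cone_lower_bound:
  assumes C: "is_circuit h w \<T> C" and "r \<in> nodes C" "input_support h w C r \<inter> B \<noteq> {}"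
  defines "m \<equiv> card (input_support h w C r \<inter> B)"
  shows "3 * real m * log 3 (real m) \<le> real (\<Sum>v\<in>cone C r. fanin C v * card (input_support h w C v \<inter> B))"
proof -
  let ?S = "input_support h w C" and ?F = "\<lambda>p. real (fanin_between h w C p r)"
  have "(\<Sum>p\<in>?S r \<inter> B. 3 powr (- ?F p / 3)) \<le> (\<Sum>p\<in>?S r. 3 powr (- ?F p / 3))"
    by (rule sum_mono2) (auto simp: finite_input_support)
  also have "\<dots> \<le> 1"
    by (rule kraft_fanin_between[OF C assms(2)])
  finally have "3 * real m * log 3 (real m) \<le> (\<Sum>p\<in>?S r \<inter> B. ?F p)"
    unfolding m_def using assms(3) finite_input_support by (intro kraft_sum_lower_bound) auto
  then show ?thesis
    by (simp add: sum_fanin_cone_eq[OF C])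
qed

section \<open>The double-counting bound\<close>

definition output_traces :: "circuit \<Rightarrow> pixel set set \<Rightarrow> pixel set \<Rightarrow> nat \<Rightarrow> pixel set set" where
  "output_traces C \<T> B v = (\<lambda>T. T \<inter> B) ` {T \<in> \<T>. v \<in> cone C (out C T)}"

lemma card_output_traces_mult_le:
  assumes C: "or_computes h w \<T> C" and sub: "\<And>T. T \<in> \<T> \<Longrightarrow> T \<subseteq> image h w"
    and L: "finite L" "\<And>T. T \<in> \<T> \<Longrightarrow> T \<inter> B \<in> L"
    and rect: "\<And>X. card {P \<in> L. X \<subseteq> P} * card X \<le> m"
  shows "card (output_traces C \<T> B v) * card (input_support h w C v \<inter> B) \<le> m"
proof -
  have "output_traces C \<T> B v \<subseteq> {P \<in> L. input_support h w C v \<inter> B \<subseteq> P}"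
  proof
    fix P assume "P \<in> output_traces C \<T> B v"
    then obtain T where T: "T \<in> \<T>" "v \<in> cone C (out C T)" "P = T \<inter> B"
      by (auto simp: output_traces_def)
    then have "input_support h w C v \<subseteq> input_support h w C (out C T)"
      by (intro input_support_mono) (simp add: cone_def)
    then show "P \<in> {P \<in> L. input_support h w C v \<inter> B \<subseteq> P}"
      using input_support_out[OF C T(1) sub[OF T(1)]] L(2)[OF T(1)] T(3) by blast
  qed
  then have "card (output_traces C \<T> B v) \<le> card {P \<in> L. input_support h w C v \<inter> B \<subseteq> P}"
    using L(1) by (intro card_mono) auto
  then have "card (output_traces C \<T> B v) * card (input_support h w C v \<inter> B)
      \<le> card {P \<in> L. input_support h w C v \<inter> B \<subseteq> P} * card (input_support h w C v \<inter> B)"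
    by (rule mult_le_mono1)
  also have "\<dots> \<le> m"
    by (rule rect)
  finally show ?thesis .
qed

lemma output_traces_lower_bound:
  assumes C: "or_computes h w \<T> C" and sub: "\<And>T. T \<in> \<T> \<Longrightarrow> T \<subseteq> image h w"
    and "T \<in> \<T>" "T \<inter> B \<noteq> {}"
  defines "m \<equiv> card (T \<inter> B)"
  shows "3 * real m * log 3 (real m)
    \<le> real (\<Sum>v\<in>{v \<in> nodes C. T \<inter> B \<in> output_traces C \<T> B v}. fanin C v * card (input_support h w C v \<inter> B))"
proof -
  have ic: "is_circuit h w \<T> C"
    using C by (simp add: or_computes_def)
  have S: "input_support h w C (out C T) = T"
    by (rule input_support_out[OF C assms(3) sub[OF assms(3)]])
  have "cone C (out C T) \<subseteq> {v \<in> nodes C. T \<inter> B \<in> output_traces C \<T> B v}"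
    using assms(3) by (auto simp: output_traces_def cone_def)
  then have le: "(\<Sum>v\<in>cone C (out C T). fanin C v * card (input_support h w C v \<inter> B))
      \<le> (\<Sum>v\<in>{v \<in> nodes C. T \<inter> B \<in> output_traces C \<T> B v}. fanin C v * card (input_support h w C v \<inter> B))"
    using circuit_finite_nodes[OF ic] by (intro sum_mono2) auto
  have "3 * real m * log 3 (real m)
      \<le> real (\<Sum>v\<in>cone C (out C T). fanin C v * card (input_support h w C v \<inter> B))"
    using sum_fanin_cone_lower_bound[OF ic circuit_out_node[OF ic assms(3)], of B] S assms(4)
    unfolding m_def by simp
  then show ?thesis
    using le by (meson of_nat_le_iff order_trans)
qed

lemma sum_output_traces_lower_bound:
  assumes C: "or_computes h w \<T> C" and sub: "\<And>T. T \<in> \<T> \<Longrightarrow> T \<subseteq> image h w"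
    and L: "\<And>P. P \<in> L \<Longrightarrow> \<exists>T\<in>\<T>. T \<inter> B = P"
    and card_L: "\<And>P. P \<in> L \<Longrightarrow> card P = m" "0 < m"
  shows "real (card L) * (3 * real m * log 3 (real m))
    \<le> real (\<Sum>P\<in>L. \<Sum>v\<in>{v \<in> nodes C. P \<in> output_traces C \<T> B v}.
          fanin C v * card (input_support h w C v \<inter> B))"
proof -
  have "3 * real m * log 3 (real m)
      \<le> real (\<Sum>v\<in>{v \<in> nodes C. P \<in> output_traces C \<T> B v}. fanin C v * card (input_support h w C v \<inter> B))"
    if "P \<in> L" for P
  proof -
    obtain T where T: "T \<in> \<T>" "T \<inter> B = P"
      using L \<open>P \<in> L\<close> by blast
    have m: "card P = m"
      using card_L(1) \<open>P \<in> L\<close> .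
    then have "T \<inter> B \<noteq> {}"
      using card_L(2) T(2) by auto
    from output_traces_lower_bound[OF C sub T(1) this]
    show ?thesis
      unfolding T(2) m .
  qed
  then show ?thesis
    using sum_mono[of L "\<lambda>_. 3 * real m * log 3 (real m)"] by (simp add: of_nat_sum)
qed

lemma card_edges_lower_bound:
  assumes C: "or_computes h w \<T> C" and sub: "\<And>T. T \<in> \<T> \<Longrightarrow> T \<subseteq> image h w"
    and L: "finite L" "\<And>T. T \<in> \<T> \<Longrightarrow> T \<inter> B \<in> L" "\<And>P. P \<in> L \<Longrightarrow> \<exists>T\<in>\<T>. T \<inter> B = P"
    and card_L: "\<And>P. P \<in> L \<Longrightarrow> card P = m" "0 < m"
    and rect: "\<And>X. card {P \<in> L. X \<subseteq> P} * card X \<le> m"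
  shows "real (card L) * (3 * real m * log 3 (real m)) \<le> real m * real (card (edges C))"
proof -
  have ic: "is_circuit h w \<T> C"
    using C by (simp add: or_computes_def)
  let ?V = "nodes C" and ?tr = "output_traces C \<T> B"
  let ?g = "\<lambda>v. fanin C v * card (input_support h w C v \<inter> B)"
  note lower = sum_output_traces_lower_bound[where L = L, OF C sub L(3) card_L]
  have "(\<Sum>P\<in>L. \<Sum>v\<in>{v \<in> ?V. P \<in> ?tr v}. ?g v) = (\<Sum>v\<in>?V. \<Sum>P\<in>{P \<in> L. P \<in> ?tr v}. ?g v)"
    using sum.swap_restrict[OF circuit_finite_nodes[OF ic] L(1), where g = "\<lambda>v _. ?g v" and R = "\<lambda>v P. P \<in> ?tr v"]
    by simp
  also have "\<dots> = (\<Sum>v\<in>?V. fanin C v * (card (?tr v) * card (input_support h w C v \<inter> B)))"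
  proof (intro sum.cong refl)
    fix v
    have "{P \<in> L. P \<in> ?tr v} = ?tr v"
      using L(2) by (auto simp: output_traces_def)
    then show "(\<Sum>P\<in>{P \<in> L. P \<in> ?tr v}. ?g v) = fanin C v * (card (?tr v) * card (input_support h w C v \<inter> B))"
      by simp
  qed
  also have "\<dots> \<le> (\<Sum>v\<in>?V. fanin C v * m)"
    using card_output_traces_mult_le[OF C sub L(1,2) rect] by (intro sum_mono mult_le_mono2)
  also have "\<dots> = m * card (edges C)"
    by (simp add: card_edges_eq_sum_fanin[OF ic] sum_distrib_left ac_simps)
  finally have "(\<Sum>P\<in>L. \<Sum>v\<in>{v \<in> ?V. P \<in> ?tr v}. ?g v) \<le> m * card (edges C)" .
  then have "real (\<Sum>P\<in>L. \<Sum>v\<in>{v \<in> ?V. P \<in> ?tr v}. ?g v) \<le> real (m * card (edges C))"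
    by (simp only: of_nat_le_iff)
  with lower show ?thesis
    by simp
qed

lemma acyclic_layered:
  fixes E :: "('a::linorder \<times> 'a) set"
  assumes "\<And>a b. (a, b) \<in> E \<Longrightarrow> a < n \<and> n \<le> b"
  shows "acyclic E"
proof -
  have layer: "a < n \<and> n \<le> b" if "(a, b) \<in> E\<^sup>+" for a b
    using that by (induction rule: trancl.induct) (use assms in fastforce)+
  show ?thesis
    unfolding acyclic_def
  proof (intro allI notI)
    fix x assume "(x, x) \<in> E\<^sup>+"
    from layer[OF this] show False
      by (meson leD)
  qed
qed

definition pixel_node :: "nat \<Rightarrow> pixel \<Rightarrow> nat" where
  "pixel_node w = (\<lambda>(i, j). i * w + j)"

lemma pixel_node_less: "p \<in> image h w \<Longrightarrow> pixel_node w p < h * w"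
proof (cases p)
  case (Pair i j)
  assume "p \<in> image h w"
  then have "i * w + j < Suc i * w" "Suc i * w \<le> h * w"
    using Pair by (simp, simp add: mult_le_mono1 Suc_le_eq del: mult_Suc)
  then show ?thesis
    using Pair by (simp add: pixel_node_def)
qed

lemma inj_on_pixel_node: "inj_on (pixel_node w) (image h w)"
proof (rule inj_onI, clarify)
  fix i j i' j' assume "(i, j) \<in> image h w" "(i', j') \<in> image h w"
    and eq: "pixel_node w (i, j) = pixel_node w (i', j')"
  then have "j = j'"
    using eq by (simp add: pixel_node_def) (metis mod_less mod_mult_self3)
  with eq \<open>(i, j) \<in> image h w\<close> show "i = i' \<and> j = j'"
    by (simp add: pixel_node_def)
qed

definition depth_one_circuit :: "nat \<Rightarrow> nat \<Rightarrow> pixel set set \<Rightarrow> (pixel set \<Rightarrow> nat) \<Rightarrow> circuit" where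
  "depth_one_circuit h w \<T> f =
    \<lparr>nodes = pixel_node w ` image h w \<union> (\<lambda>T. h * w + f T) ` \<T>,
     edges = {(pixel_node w p, h * w + f T) | p T. T \<in> \<T> \<and> p \<in> T},
     inp = pixel_node w, out = \<lambda>T. h * w + f T\<rparr>"

lemma depth_one_circuit_layered:
  assumes "\<And>T. T \<in> \<T> \<Longrightarrow> T \<subseteq> image h w" "(a, b) \<in> edges (depth_one_circuit h w \<T> f)"
  shows "a < h * w \<and> h * w \<le> b"
proof -
  obtain p T where "T \<in> \<T>" "p \<in> T" "a = pixel_node w p" "b = h * w + f T"
    using assms(2) unfolding depth_one_circuit_def by auto
  then show ?thesis
    using assms(1) pixel_node_less[of p h w] by auto
qed

lemma is_circuit_depth_one:
  assumes "finite \<T>" "inj_on f \<T>" "\<And>T. T \<in> \<T> \<Longrightarrow> T \<subseteq> image h w" "\<And>T. T \<in> \<T> \<Longrightarrow> T \<noteq> {}"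
  shows "is_circuit h w \<T> (depth_one_circuit h w \<T> f)"
proof -
  let ?C = "depth_one_circuit h w \<T> f"
  note layered = depth_one_circuit_layered[where \<T> = \<T> and f = f, OF assms(3)]
  show ?thesis
    unfolding is_circuit_def
  proof (intro conjI ballI allI impI)
    show "finite (nodes ?C)"
      using assms(1) by (simp add: depth_one_circuit_def finite_image_pixels)
    show "edges ?C \<subseteq> nodes ?C \<times> nodes ?C"
      using assms(3) by (auto simp: depth_one_circuit_def)
    show "acyclic (edges ?C)"
      by (rule acyclic_layered[OF layered])
    show "inj_on (inp ?C) (image h w)" "inp ?C ` image h w \<subseteq> nodes ?C" "out ?C ` \<T> \<subseteq> nodes ?C"
      by (auto simp: depth_one_circuit_def inj_on_pixel_node)
    show "inj_on (out ?C) \<T>"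
      using assms(2) by (simp add: depth_one_circuit_def inj_on_def)
  next
    fix p u assume "p \<in> image h w"
    then show "(u, inp ?C p) \<notin> edges ?C"
      using layered[where a = u] pixel_node_less[of p h w] by (auto simp: depth_one_circuit_def)
  next
    fix T v assume "T \<in> \<T>"
    show "(out ?C T, v) \<notin> edges ?C"
      using layered[where b = v] by (auto simp: depth_one_circuit_def)
  next
    fix v assume v: "v \<in> nodes ?C" and no_in: "\<forall>u. (u, v) \<notin> edges ?C"
    show "v \<in> inp ?C ` image h w"
    proof (rule ccontr)
      assume "v \<notin> inp ?C ` image h w"
      then obtain T where T: "T \<in> \<T>" "v = h * w + f T"
        using v by (auto simp: depth_one_circuit_def)
      obtain p where "p \<in> T"
        using assms(4)[OF T(1)] by blast
      then have "(pixel_node w p, v) \<in> edges ?C"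
        using T unfolding depth_one_circuit_def circuit.simps by blast
      with no_in show False
        by blast
    qed
  qed
qed

lemma or_computes_depth_one:
  assumes "finite \<T>" "inj_on f \<T>" "\<And>T. T \<in> \<T> \<Longrightarrow> T \<subseteq> image h w" "\<And>T. T \<in> \<T> \<Longrightarrow> T \<noteq> {}"
  shows "or_computes h w \<T> (depth_one_circuit h w \<T> f)"
  unfolding or_computes_def
proof (intro conjI allI impI ballI is_circuit_depth_one[OF assms])
  let ?C = "depth_one_circuit h w \<T> f"
  fix x val T
  assume ev: "or_eval h w ?C x val" and T: "T \<in> \<T>"
  have in_edge: "(u, out ?C T) \<in> edges ?C \<longleftrightarrow> (\<exists>p\<in>T. u = pixel_node w p)" for u
  proof -
    have "(u, out ?C T) \<in> edges ?C \<longleftrightarrow> (\<exists>p T'. u = pixel_node w p \<and> f T = f T' \<and> T' \<in> \<T> \<and> p \<in> T')"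
      unfolding depth_one_circuit_def circuit.simps mem_Collect_eq prod.inject add_left_cancel by blast
    then show ?thesis
      using inj_onD[OF assms(2)] T by blast
  qed
  have node: "out ?C T \<in> nodes ?C"
    using T by (simp add: depth_one_circuit_def)
  have gate: "val v = (\<exists>u. (u, v) \<in> edges ?C \<and> val u)" if "v \<in> nodes ?C" "\<exists>u. (u, v) \<in> edges ?C" for v
    using ev that unfolding or_eval_def by blast
  obtain p0 where "p0 \<in> T"
    using assms(4)[OF T] by blast
  then have "val (out ?C T) = (\<exists>u. (u, out ?C T) \<in> edges ?C \<and> val u)"
    using in_edge by (intro gate[OF node]) blast
  also have "\<dots> = (\<exists>p\<in>T. val (pixel_node w p))"
    unfolding in_edge by blast
  also have "\<dots> = (\<exists>p\<in>T. x p)"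
    using ev assms(3)[OF T] unfolding or_eval_def by (auto simp: depth_one_circuit_def)
  finally show "val (out ?C T) = (\<exists>p\<in>T. x p)" .
qed

lemma OR_complexity_attained:
  assumes "finite \<T>" "\<And>T. T \<in> \<T> \<Longrightarrow> T \<subseteq> image h w" "\<And>T. T \<in> \<T> \<Longrightarrow> T \<noteq> {}"
  obtains C where "or_computes h w \<T> C" "OR_complexity h w \<T> = card (edges C)"
proof -
  obtain f :: "pixel set \<Rightarrow> nat" and n where "inj_on f \<T>"
    using finite_imp_inj_to_nat_seg[OF assms(1)] by blast
  then have "or_computes h w \<T> (depth_one_circuit h w \<T> f)"
    by (rule or_computes_depth_one[OF assms(1) _ assms(2,3)])
  then have "(\<lambda>C. card (edges C)) ` {C. or_computes h w \<T> C} \<noteq> {}"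
    by blast
  then have "OR_complexity h w \<T> \<in> (\<lambda>C. card (edges C)) ` {C. or_computes h w \<T> C}"
    unfolding OR_complexity_def by (rule Inf_nat_def1)
  then show thesis
    using that by blast
qed

lemma FHT_eq: "FHT h w = (\<lambda>Q. Q \<inter> image h w) ` FHT_level w (nat \<lceil>log 2 (real h)\<rceil>)"
  unfolding FHT_def by blast

lemma finite_FHT: "finite (FHT h w)"
  unfolding FHT_eq by (simp add: finite_FHT_level)

lemma FHT_subset_image: "T \<in> FHT h w \<Longrightarrow> T \<subseteq> image h w"
  unfolding FHT_eq by blast

lemma FHT_nonempty:
  assumes "0 < w" "1 \<le> h" "T \<in> FHT h w"
  shows "T \<noteq> {}"
proof -
  obtain Q where Q: "Q \<in> FHT_level w (nat \<lceil>log 2 (real h)\<rceil>)" "T = Q \<inter> image h w"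
    using assms(3) unfolding FHT_eq by blast
  then have "(0, bot_col Q) \<in> Q"
    using bot_col_mem[OF FHT_level_row_graph[OF assms(1)]] by simp
  moreover have "bot_col Q < w"
    using row_graph_columns[OF FHT_level_row_graph[OF assms(1) Q(1)]] calculation by auto
  ultimately show ?thesis
    using Q(2) assms(2) by auto
qed

lemma FHT_restrict:
  assumes "0 < w" "2 ^ d \<le> h" "d \<le> nat \<lceil>log 2 (real h)\<rceil>"
  shows "(\<lambda>T. T \<inter> image (2 ^ d) w) ` FHT h w = FHT_level w d"
proof -
  have "Q \<inter> image h w \<inter> image (2 ^ d) w = Q \<inter> image (2 ^ d) w" for Q
    using image_mono_height[OF assms(2)] by blast
  then show ?thesis
    unfolding FHT_eq image_image using FHT_level_restrict[OF assms(1,3)] by simp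
qed

lemma two_pow_floor_log_le:
  assumes "1 \<le> h"
  shows "2 ^ nat \<lfloor>log 2 (real h)\<rfloor> \<le> h"
proof -
  have "0 \<le> log 2 (real h)"
    using assms by simp
  then have "real (nat \<lfloor>log 2 (real h)\<rfloor>) \<le> log 2 (real h)"
    by simp
  then have "2 powr real (nat \<lfloor>log 2 (real h)\<rfloor>) \<le> 2 powr log 2 (real h)"
    by (intro powr_mono) auto
  also have "\<dots> = real h"
    using assms by simp
  finally show ?thesis
    by (simp add: powr_realpow)
qed

lemma card_edges_FHT_lower_bound:
  assumes "2 \<le> w" "or_computes h w (FHT h w) C" "2 ^ d \<le> h" "d \<le> nat \<lceil>log 2 (real h)\<rceil>"
  shows "3 * real w * 2 ^ d * log 3 (2 ^ d) \<le> real (card (edges C))"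
proof -
  have w: "0 < w"
    using assms(1) by simp
  have "real (card (FHT_level w d)) * (3 * real (2 ^ d) * log 3 (real (2 ^ d)))
      \<le> real (2 ^ d) * real (card (edges C))"
  proof (rule card_edges_lower_bound[OF assms(2) FHT_subset_image finite_FHT_level])
    show "T \<inter> image (2 ^ d) w \<in> FHT_level w d" if "T \<in> FHT h w" for T
      using that unfolding FHT_restrict[OF w assms(3,4), symmetric] by blast
    show "\<exists>T\<in>FHT h w. T \<inter> image (2 ^ d) w = P" if "P \<in> FHT_level w d" for P
      using that unfolding FHT_restrict[OF w assms(3,4), symmetric] by blast
    show "card P = 2 ^ d" if "P \<in> FHT_level w d" for P
      using row_graph_card[OF FHT_level_row_graph[OF w that]] .
    show "card {P \<in> FHT_level w d. X \<subseteq> P} * card X \<le> 2 ^ d" for X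
      by (rule FHT_level_rectangle_bound[OF assms(1)])
    show "0 < (2::nat) ^ d"
      by simp
  qed
  then have "real (2 ^ d) * (3 * real w * 2 ^ d * log 3 (2 ^ d)) \<le> real (2 ^ d) * real (card (edges C))"
    by (simp add: card_FHT_level[OF assms(1)] ac_simps)
  then show ?thesis
    by (simp add: mult_le_cancel_left_pos)
qed

theorem theorem2:
  fixes h w :: nat
  assumes "w \<ge> 2" and "h \<ge> 1"
  shows "real (OR_complexity h w (FHT h w))
           \<ge> 3 * real w * (2 ^ nat \<lfloor>log 2 (real h)\<rfloor>) * log 3 (2 ^ nat \<lfloor>log 2 (real h)\<rfloor>)"
proof -
  define d where "d = nat \<lfloor>log 2 (real h)\<rfloor>"
  have d: "2 ^ d \<le> h" "d \<le> nat \<lceil>log 2 (real h)\<rceil>"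
    unfolding d_def by (rule two_pow_floor_log_le[OF assms(2)], intro nat_mono floor_le_ceiling)
  have w: "0 < w"
    using assms(1) by simp
  obtain C where C: "or_computes h w (FHT h w) C" "OR_complexity h w (FHT h w) = card (edges C)"
    using OR_complexity_attained[OF finite_FHT FHT_subset_image FHT_nonempty[OF w assms(2)]] by blast
  from card_edges_FHT_lower_bound[OF assms(1) C(1) d] show ?thesis
    unfolding C(2) d_def .
qed

end
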